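(* Let $p\ge 2$ and $r\in R_p$. Then the set $N_p^{c_p^r}$ exists and $N_p^{c_p^r}\subseteq\overline{B(r)}$.
   Context: Let $f:\mathbb{R}^n\to\mathbb{R}^n$ be real-analytic with $f(0)=0$, and assume all eigenvalues of $A=\frac{\partial f}{\partial x}(0)$ have negative real parts. $\|\cdot\|$ is the Euclidean norm and $B(r)=\{x:\|x\|<r\}$. Let $V$ be the real-analytic function on a neighborhood of $0$ with $\langle\nabla V(x),f(x)\rangle=-\|x\|^2$, $V(0)=0$, and for $p\ge 2$ let $V_p$ be the Taylor polynomial of $V$ at $0$ of degree $p$ (terms of degrees $2,\dots,p$). Let $G_p$ be the maximal domain (connected open set) containing $0$ such that $V_p(x)>0$ and $\langle\nabla V_p(x),f(x)\rangle<0$ for all $x\in G_p\setminus\{0\}$. A closed connected set $S\subset\mathbb{R}^n$ is called $(p,c)$-admissible if: $0\in\mathrm{Int}(S)$; $V_p(x)<c$ for all $x\in\mathrm{Int}(S)$; $V_p(x)=c$ for all $x\in\partial S$; and $S$ is compact with $S\subset G_p$. For given $p,c$ there is at most one such set; when it exists it is denoted $N_p^c$. Let $R_p=\{r>0:\overline{B(r)}\subset G_p\}$ and, for $r\in R_p$, $c_p^r=\inf_{\|x\|=r}V_p(x)$. *)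

theory Defs
  imports "HOL-Analysis.Analysis"
begin

definition monomial :: "('n::finite \<Rightarrow> nat) \<Rightarrow> real^'n \<Rightarrow> real" where
  "monomial \<alpha> x = (\<Prod>i\<in>UNIV. (x $ i) ^ (\<alpha> i))"

definition mdeg :: "('n::finite \<Rightarrow> nat) \<Rightarrow> nat" where
  "mdeg \<alpha> = (\<Sum>i\<in>UNIV. \<alpha> i)"

definition has_power_series ::
  "(real^'n::finite \<Rightarrow> 'b::real_normed_vector) \<Rightarrow> (('n \<Rightarrow> nat) \<Rightarrow> 'b) \<Rightarrow> real^'n \<Rightarrow> real \<Rightarrow> bool" where
  "has_power_series F c x0 \<rho> \<longleftrightarrow>
     (\<forall>x\<in>ball x0 \<rho>. ((\<lambda>\<alpha>. monomial \<alpha> (x - x0) *\<^sub>R c \<alpha>) has_sum F x) UNIV)"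

definition real_analytic_on ::
  "(real^'n::finite \<Rightarrow> 'b::real_normed_vector) \<Rightarrow> (real^'n) set \<Rightarrow> bool" where
  "real_analytic_on F U \<longleftrightarrow>
     (\<forall>x0\<in>U. \<exists>\<rho>>0. \<exists>c. has_power_series F c x0 \<rho>)"

definition taylor_poly :: "(('n::finite \<Rightarrow> nat) \<Rightarrow> real) \<Rightarrow> nat \<Rightarrow> real^'n \<Rightarrow> real" where
  "taylor_poly c p x = (\<Sum>\<alpha>\<in>{\<alpha>. 2 \<le> mdeg \<alpha> \<and> mdeg \<alpha> \<le> p}. c \<alpha> * monomial \<alpha> x)"

definition good_domain :: "(real^'n::finite \<Rightarrow> real^'n) \<Rightarrow> (real^'n \<Rightarrow> real) \<Rightarrow> (real^'n) set \<Rightarrow> bool" where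
  "good_domain f W S \<longleftrightarrow> open S \<and> connected S \<and> 0 \<in> S \<and>
     (\<forall>x\<in>S - {0}. W x > 0 \<and> frechet_derivative W (at x) (f x) < 0)"

definition Gdom :: "(real^'n::finite \<Rightarrow> real^'n) \<Rightarrow> (real^'n \<Rightarrow> real) \<Rightarrow> (real^'n) set" where
  "Gdom f W = \<Union>{S. good_domain f W S}"

text \<open>(p,c)-admissible sets for the function W (= V_p) and domain G (= G_p).\<close>

definition admissible :: "(real^'n::finite \<Rightarrow> real) \<Rightarrow> (real^'n) set \<Rightarrow> real \<Rightarrow> (real^'n) set \<Rightarrow> bool" where
  "admissible W G c S \<longleftrightarrow> closed S \<and> connected S \<and> 0 \<in> interior S \<and>
     (\<forall>x\<in>interior S. W x < c) \<and> (\<forall>x\<in>frontier S. W x = c) \<and> compact S \<and> S \<subseteq> G"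

end

(* V_p is a polynomial, hence C^1; on the punctured closed ball of radius r it is positive and,
   having negative derivative along f, has no critical point.  Let c be its minimum over the sphere
   |x| = r.  The closure of the component of {x in B(r). V_p x < c} containing 0 is
   (p,c)-admissible: an interior point with V_p = c would be a local maximum of V_p, and a
   frontier point with V_p < c would lie in the open component itself.
   Conversely let S be connected, 0 in S and V_p <= c on S.  A point z of S on the sphere
   minimises V_p over the sphere, so the gradient there is a nonzero multiple of z, i.e. the
   radial derivative D z z does not vanish.  By the mean value theorem along rays, near such z
   the values of V_p exceed c outside the ball if D z z > 0, and inside the ball if D z z < 0.
   Hence S cannot pass from inside to outside the ball near any point of the sphere, and by
   connectedness S stays in the closed ball. *)

theory Submission
  imports Defs
begin

lemma strict_increase_along_ray:
  fixes W :: "'a::real_normed_vector \<Rightarrow> real"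
  assumes W_deriv: "\<And>x. (W has_derivative D x) (at x)"
    and "0 < a" "0 < b"
    and sign: "\<And>w. w \<in> closed_segment (a *\<^sub>R y) (b *\<^sub>R y) \<Longrightarrow> 0 < (b - a) * D w w"
  shows "W (a *\<^sub>R y) < W (b *\<^sub>R y)"
proof -
  have ray_deriv: "((\<lambda>t. W (t *\<^sub>R y)) has_real_derivative D (t *\<^sub>R y) y) (at t)" for t
  proof -
    have "((\<lambda>t. W (t *\<^sub>R y)) has_derivative (\<lambda>h. D (t *\<^sub>R y) (h *\<^sub>R y))) (at t)"
      by (rule has_derivative_compose[of "\<lambda>t. t *\<^sub>R y", OF _ W_deriv]) (intro derivative_eq_intros, auto)
    moreover have "linear (D (t *\<^sub>R y))"
      using W_deriv has_derivative_linear by blast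
    ultimately show ?thesis
      by (simp add: has_field_derivative_def linear_scale mult_commute_abs)
  qed
  obtain \<xi> where \<xi>: "\<xi> \<in> closed_segment a b" and
    mvt: "W (b *\<^sub>R y) - W (a *\<^sub>R y) = (b - a) * D (\<xi> *\<^sub>R y) y"
  proof (cases "a < b")
    case True
    then obtain \<xi> where "a < \<xi>" "\<xi> < b" "W (b *\<^sub>R y) - W (a *\<^sub>R y) = (b - a) * D (\<xi> *\<^sub>R y) y"
      using MVT2[of a b "\<lambda>t. W (t *\<^sub>R y)", OF _ ray_deriv] by blast
    then show ?thesis
      using that[of \<xi>] True by (simp add: closed_segment_eq_real_ivl)
  next
    case False
    have "a \<noteq> b"
      using sign[of "a *\<^sub>R y"] by auto
    with False obtain \<xi> where "b < \<xi>" "\<xi> < a" "W (a *\<^sub>R y) - W (b *\<^sub>R y) = (a - b) * D (\<xi> *\<^sub>R y) y"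
      using MVT2[of b a "\<lambda>t. W (t *\<^sub>R y)", OF _ ray_deriv] by force
    then show ?thesis
      using that[of \<xi>] False by (simp add: closed_segment_eq_real_ivl algebra_simps)
  qed
  have "0 < \<xi>"
    using \<xi> \<open>0 < a\<close> \<open>0 < b\<close> by (auto simp: closed_segment_eq_real_ivl split: if_splits)
  have "\<xi> *\<^sub>R y \<in> closed_segment (a *\<^sub>R y) (b *\<^sub>R y)"
  proof -
    have "closed_segment (a *\<^sub>R y) (b *\<^sub>R y) = (\<lambda>t. t *\<^sub>R y) ` closed_segment a b"
      by (rule closed_segment_linear_image) (simp add: bounded_linear_scaleR_left bounded_linear.linear)
    then show ?thesis
      using \<xi> by blast
  qed
  then have "0 < (b - a) * D (\<xi> *\<^sub>R y) (\<xi> *\<^sub>R y)"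
    by (rule sign)
  moreover have "linear (D (\<xi> *\<^sub>R y))"
    using W_deriv has_derivative_linear by blast
  ultimately have "0 < (b - a) * (\<xi> * D (\<xi> *\<^sub>R y) y)"
    by (simp add: linear_scale)
  then have "0 < (b - a) * D (\<xi> *\<^sub>R y) y"
    using \<open>0 < \<xi>\<close> by (metis mult.left_commute zero_less_mult_pos)
  then show ?thesis
    using mvt by linarith
qed

lemma sphere_min_derivative_zero:
  fixes W :: "'a::real_inner \<Rightarrow> real"
  assumes W_deriv: "(W has_derivative W') (at z)" and "z \<noteq> 0"
    and min: "\<And>y. norm y = norm z \<Longrightarrow> W z \<le> W y"
    and radial: "W' z = 0"
  shows "W' = (\<lambda>h. 0)"
proof -
  \<comment> \<open>\<open>\<nu> x *\<^sub>R x\<close> is the radial projection onto the sphere through \<open>z\<close>.\<close>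
  define \<nu> where "\<nu> x = norm z / norm (x::'a)" for x
  obtain \<nu>' where \<nu>': "(\<nu> has_derivative \<nu>') (at z)"
  proof -
    have "\<nu> differentiable at z"
      unfolding \<nu>_def using \<open>z \<noteq> 0\<close> by (intro derivative_intros) auto
    then show ?thesis
      using that by (auto simp: differentiable_def)
  qed
  have proj: "((\<lambda>x. \<nu> x *\<^sub>R x) has_derivative (\<lambda>h. h + \<nu>' h *\<^sub>R z)) (at z)"
    using has_derivative_scaleR[OF \<nu>' has_derivative_ident] \<open>z \<noteq> 0\<close> by (simp add: \<nu>_def)
  have "linear W'"
    using W_deriv has_derivative_linear by blast
  then have "((\<lambda>x. W (\<nu> x *\<^sub>R x)) has_derivative W') (at z)"
    using has_derivative_compose[OF proj, of W W'] W_deriv \<open>z \<noteq> 0\<close> radial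
    by (simp add: \<nu>_def linear_add linear_scale)
  moreover have "eventually (\<lambda>x. W (\<nu> z *\<^sub>R z) \<le> W (\<nu> x *\<^sub>R x)) (at z)"
  proof -
    have "eventually (\<lambda>x. x \<noteq> 0) (at z)"
      using t1_space_nhds[OF \<open>z \<noteq> 0\<close>] by (simp add: eventually_at_filter eventually_mono)
    then show ?thesis
    proof (rule eventually_mono)
      fix x :: 'a assume "x \<noteq> 0"
      then have "norm (\<nu> x *\<^sub>R x) = norm z"
        by (simp add: \<nu>_def)
      then show "W (\<nu> z *\<^sub>R z) \<le> W (\<nu> x *\<^sub>R x)"
        using min \<open>z \<noteq> 0\<close> by (simp add: \<nu>_def)
    qed
  qed
  ultimately show ?thesis
    by (rule has_derivative_local_min)
qed

locale lyapunov_ball =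
  fixes W :: "'a::euclidean_space \<Rightarrow> real" and D :: "'a \<Rightarrow> 'a \<Rightarrow> real" and r :: real
  assumes W_has_derivative: "\<And>x. (W has_derivative D x) (at x)"
    and continuous_D_diag: "continuous_on UNIV (\<lambda>x. D x x)"
    and W_zero: "W 0 = 0"
    and r_pos: "0 < r"
    and W_pos: "\<And>x. x \<in> cball 0 r \<Longrightarrow> x \<noteq> 0 \<Longrightarrow> 0 < W x"
    and D_nonzero: "\<And>x. x \<in> cball 0 r \<Longrightarrow> x \<noteq> 0 \<Longrightarrow> D x \<noteq> (\<lambda>h. 0)"
begin

lemma continuous_on_W: "continuous_on A W"
  using W_has_derivative has_derivative_continuous continuous_at_imp_continuous_on by blast

definition level :: real where
  "level = (INF x\<in>sphere 0 r. W x)"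

lemma level_le_on_sphere: "norm x = r \<Longrightarrow> level \<le> W x"
proof -
  assume "norm x = r"
  have "bdd_below (W ` sphere 0 r)"
    using W_pos r_pos by (intro bdd_belowI2[of _ 0]) (force intro: less_imp_le)
  then show ?thesis
    unfolding level_def using \<open>norm x = r\<close> by (intro cINF_lower) auto
qed

lemma level_attained: "\<exists>z. norm z = r \<and> W z = level"
proof -
  have "sphere (0::'a) r \<noteq> {}"
    using r_pos by simp
  then obtain z where z: "z \<in> sphere 0 r" and min: "\<And>y. y \<in> sphere 0 r \<Longrightarrow> W z \<le> W y"
    using continuous_attains_inf[OF compact_sphere _ continuous_on_W] by blast
  have "W z \<le> level"
    unfolding level_def using z min r_pos by (intro cINF_greatest) auto
  then show ?thesis
    using z level_le_on_sphere[of z] by auto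
qed

lemma level_pos: "0 < level"
  using level_attained W_pos r_pos by force

definition level_core :: "'a set" where
  "level_core = connected_component_set (ball 0 r \<inter> {x. W x < level}) 0"

definition level_domain :: "'a set" where
  "level_domain = closure level_core"

lemma open_level_core: "open level_core"
  unfolding level_core_def
  by (intro open_connected_component open_Int open_ball open_Collect_less continuous_on_W continuous_on_const)

lemma zero_in_level_core: "0 \<in> level_core"
  unfolding level_core_def using r_pos W_zero level_pos by simp

lemma level_core_subset: "level_core \<subseteq> ball 0 r \<inter> {x. W x < level}"
  unfolding level_core_def by (rule connected_component_subset)

lemma level_domain_subset_cball: "level_domain \<subseteq> cball 0 r"
  unfolding level_domain_def using level_core_subset by (intro closure_minimal) auto

lemma W_le_level_on_level_domain: "x \<in> level_domain \<Longrightarrow> W x \<le> level"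
proof -
  have "level_domain \<subseteq> {x. W x \<le> level}"
    unfolding level_domain_def using level_core_subset
    by (intro closure_minimal closed_Collect_le continuous_on_W continuous_on_const) auto
  then show "x \<in> level_domain \<Longrightarrow> W x \<le> level"
    by blast
qed

lemma compact_level_domain: "compact level_domain"
  using level_domain_subset_cball unfolding level_domain_def
  by (meson bounded_cball bounded_subset closed_closure compact_eq_bounded_closed)

lemma connected_level_domain: "connected level_domain"
  unfolding level_domain_def level_core_def by (simp add: connected_imp_connected_closure)

lemma level_core_subset_interior: "level_core \<subseteq> interior level_domain"
  unfolding level_domain_def using open_level_core by (simp add: closure_subset interior_maximal)

lemma W_lt_level_on_interior:
  assumes x: "x \<in> interior level_domain"
  shows "W x < level"
proof (rule ccontr)
  assume "\<not> W x < level"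
  then have "W x = level"
    using x interior_subset W_le_level_on_level_domain by (metis antisym_conv2 subsetD)
  have "eventually (\<lambda>y. y \<in> interior level_domain) (at x)"
    using x by (rule eventually_at_in_open'[OF open_interior])
  then have "eventually (\<lambda>y. W y \<le> W x) (at x)"
    by (rule eventually_mono)
      (use \<open>W x = level\<close> interior_subset W_le_level_on_level_domain in \<open>metis subsetD\<close>)
  then have "D x = (\<lambda>h. 0)"
    by (rule has_derivative_local_max[OF W_has_derivative])
  moreover have "x \<noteq> 0"
    using \<open>W x = level\<close> W_zero level_pos by auto
  moreover have "x \<in> cball 0 r"
    using x interior_subset level_domain_subset_cball by blast
  ultimately show False
    using D_nonzero by blast
qed

lemma W_eq_level_on_frontier:
  assumes x: "x \<in> frontier level_domain"
  shows "W x = level"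
proof (rule ccontr)
  assume "W x \<noteq> level"
  have "x \<in> level_domain"
    using x by (simp add: frontier_def level_domain_def)
  then have "x \<in> ball 0 r \<inter> {x. W x < level}"
    using \<open>W x \<noteq> level\<close> W_le_level_on_level_domain level_domain_subset_cball level_le_on_sphere[of x]
    by fastforce
  obtain T where "closed T" and core_eq: "level_core = (ball 0 r \<inter> {x. W x < level}) \<inter> T"
    using closedin_connected_component unfolding level_core_def closedin_closed by blast
  have "x \<in> T"
    using \<open>x \<in> level_domain\<close> closure_minimal[of level_core T] \<open>closed T\<close> core_eq
    unfolding level_domain_def by blast
  then have "x \<in> interior level_domain"
    using \<open>x \<in> ball 0 r \<inter> {x. W x < level}\<close> core_eq level_core_subset_interior by blast
  then show False
    using x by (simp add: frontier_def)
qed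

lemma D_radial_nonzero_at_level:
  assumes "norm z = r" "W z = level"
  shows "D z z \<noteq> 0"
proof
  assume "D z z = 0"
  have "z \<noteq> 0"
    using assms r_pos by auto
  have "D z = (\<lambda>h. 0)"
    by (rule sphere_min_derivative_zero[OF W_has_derivative \<open>z \<noteq> 0\<close>])
      (use assms level_le_on_sphere \<open>D z z = 0\<close> in auto)
  then show False
    using D_nonzero \<open>z \<noteq> 0\<close> assms by auto
qed

lemma W_gt_level_near_sphere:
  assumes z: "norm z = r"
    and sign: "\<forall>w\<in>ball z e. 0 < D w w * D z z"
    and y: "y \<in> ball z (e / 2)"
    and side: "0 < (norm y - r) * D z z"
  shows "level < W y"
proof -
  have "y \<in> ball z e"
    using y zero_le_dist[of z y] by (simp only: mem_ball)
  have "y \<noteq> 0"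
  proof
    assume "y = 0"
    then have "0 < D 0 0 * D z z"
      using sign \<open>y \<in> ball z e\<close> by blast
    moreover have "D 0 0 = 0"
      using W_has_derivative has_derivative_linear linear_0 by blast
    ultimately show False
      by simp
  qed
  then have "0 < norm y"
    by simp
  define u where "u = (r / norm y) *\<^sub>R y"
  have "norm u = r"
    using \<open>y \<noteq> 0\<close> r_pos by (simp add: u_def)
  have "norm (u - y) = \<bar>norm z - norm y\<bar>"
  proof -
    have "u - y = ((r - norm y) / norm y) *\<^sub>R y"
      using \<open>0 < norm y\<close> by (simp add: u_def diff_divide_distrib algebra_simps)
    then show ?thesis
      using \<open>0 < norm y\<close> z by simp
  qed
  also have "\<dots> \<le> dist z y"
    by (simp add: dist_norm norm_triangle_ineq3)
  finally have "u \<in> ball z e"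
    using y dist_triangle[of z u y] by (simp add: dist_norm norm_minus_commute)
  then have segment: "closed_segment u y \<subseteq> ball z e"
    using \<open>y \<in> ball z e\<close> by (intro closed_segment_subset convex_ball)
  have "W ((r / norm y) *\<^sub>R y) < W (1 *\<^sub>R y)"
  proof (rule strict_increase_along_ray[OF W_has_derivative])
    fix w assume "w \<in> closed_segment ((r / norm y) *\<^sub>R y) (1 *\<^sub>R y)"
    then have "0 < D w w * D z z"
      using sign segment by (auto simp: u_def)
    then have "0 < (norm y - r) * D w w"
      using side by (auto simp: zero_less_mult_iff)
    then show "0 < (1 - r / norm y) * D w w"
      using \<open>0 < norm y\<close> by (simp add: diff_divide_distrib[symmetric] field_simps)
  qed (use r_pos \<open>0 < norm y\<close> in auto)
  then show ?thesis
    using level_le_on_sphere[OF \<open>norm u = r\<close>] by (simp add: u_def)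
qed

lemma connected_sublevel_subset_cball:
  assumes "connected S" "0 \<in> S" and S_le: "\<And>x. x \<in> S \<Longrightarrow> W x \<le> level"
  shows "S \<subseteq> cball 0 r"
proof -
  obtain e where e: "\<And>z. D z z \<noteq> 0 \<Longrightarrow> 0 < e z \<and> (\<forall>w\<in>ball z (e z). 0 < D w w * D z z)"
  proof -
    have "\<exists>\<epsilon>>0. \<forall>w\<in>ball z \<epsilon>. 0 < D w w * D z z" if "D z z \<noteq> 0" for z
    proof -
      have "open {w. 0 < D w w * D z z}"
        by (intro open_Collect_less continuous_on_const continuous_on_mult continuous_D_diag)
      moreover have "0 < D z z * D z z"
        using that by (auto simp: zero_less_mult_iff neq_iff)
      ultimately show ?thesis
        by (simp add: open_contains_ball subset_eq)
    qed
    then show ?thesis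
      using that by metis
  qed
  have outside: "(norm y - r) * D z z \<le> 0"
    if "y \<in> S" "norm z = r" "D z z \<noteq> 0" "y \<in> ball z (e z / 2)" for y z
    using W_gt_level_near_sphere[of z "e z" y] e[OF that(3)] that S_le[of y] by force
  \<comment> \<open>By \<open>outside\<close>, \<open>U1\<close> and \<open>U2\<close> separate \<open>S\<close> into the parts inside and outside the ball.\<close>
  define U1 where "U1 = ball 0 r \<union> (\<Union>z\<in>{z. norm z = r \<and> 0 < D z z}. ball z (e z / 2))"
  define U2 where "U2 = - cball 0 r \<union> (\<Union>z\<in>{z. norm z = r \<and> D z z < 0}. ball z (e z / 2))"
  have "open U1" "open U2"
    unfolding U1_def U2_def by auto
  have U1_inside: "norm y \<le> r" if "y \<in> U1" "y \<in> S" for y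
    using that outside unfolding U1_def by (force simp: mult_le_0_iff)
  have U2_outside: "r \<le> norm y" if "y \<in> U2" "y \<in> S" for y
    using that outside unfolding U2_def by (force simp: mult_le_0_iff)
  have "U1 \<inter> U2 \<inter> S = {}"
  proof (intro equals0I)
    fix y assume y: "y \<in> U1 \<inter> U2 \<inter> S"
    then have "norm y = r"
      using U1_inside U2_outside by force
    with y obtain z1 z2 where
      "0 < D z1 z1" "y \<in> ball z1 (e z1 / 2)" "D z2 z2 < 0" "y \<in> ball z2 (e z2 / 2)"
      unfolding U1_def U2_def by auto
    then have "0 < D y y * D z1 z1" "0 < D y y * D z2 z2"
      using e[of z1] e[of z2] by auto
    with \<open>0 < D z1 z1\<close> \<open>D z2 z2 < 0\<close> show False
      by (simp add: zero_less_mult_iff)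
  qed
  moreover have "S \<subseteq> U1 \<union> U2"
  proof
    fix y assume "y \<in> S"
    consider "norm y < r" | "r < norm y" | "norm y = r"
      by linarith
    then show "y \<in> U1 \<union> U2"
    proof cases
      case 3
      then have "D y y \<noteq> 0"
        using D_radial_nonzero_at_level S_le[OF \<open>y \<in> S\<close>] level_le_on_sphere by force
      then have "y \<in> ball y (e y / 2)"
        using e by simp
      then show ?thesis
        using 3 \<open>D y y \<noteq> 0\<close> unfolding U1_def U2_def by (auto simp: neq_iff)
    qed (auto simp: U1_def U2_def)
  qed
  moreover have "0 \<in> U1 \<inter> S"
    using \<open>0 \<in> S\<close> r_pos by (simp add: U1_def)
  ultimately have "U2 \<inter> S = {}"
    using connectedD[OF \<open>connected S\<close> \<open>open U1\<close> \<open>open U2\<close>] by blast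
  then show ?thesis
    unfolding U2_def by auto
qed

end

lemma Gdom_pos_and_decreasing:
  assumes "x \<in> Gdom f W" "x \<noteq> 0" "(W has_derivative W') (at x)"
  shows "0 < W x \<and> W' (f x) < 0"
proof -
  obtain S where "good_domain f W S" "x \<in> S"
    using assms(1) unfolding Gdom_def by blast
  then show ?thesis
    using assms(2) frechet_derivative_at[OF assms(3)] by (simp add: good_domain_def)
qed

lemma admissible_le_level: "admissible W G c S \<Longrightarrow> x \<in> S \<Longrightarrow> W x \<le> c"
  unfolding admissible_def frontier_def
  by (metis Diff_iff closure_closed less_imp_le order_refl)

definition taylor_poly_deriv :: "(('n::finite \<Rightarrow> nat) \<Rightarrow> real) \<Rightarrow> nat \<Rightarrow> real^'n \<Rightarrow> real^'n \<Rightarrow> real" where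
  "taylor_poly_deriv c p x h = (\<Sum>\<alpha>\<in>{\<alpha>. 2 \<le> mdeg \<alpha> \<and> mdeg \<alpha> \<le> p}. c \<alpha> *
     (\<Sum>i\<in>UNIV. of_nat (\<alpha> i) * h $ i * (x $ i) ^ (\<alpha> i - 1) * (\<Prod>j\<in>UNIV - {i}. (x $ j) ^ \<alpha> j)))"

lemma has_derivative_taylor_poly: "(taylor_poly c p has_derivative taylor_poly_deriv c p x) (at x)"
  unfolding taylor_poly_def monomial_def taylor_poly_deriv_def[abs_def]
  by (intro derivative_eq_intros)
    (auto intro!: bounded_linear_imp_has_derivative bounded_linear_vec_nth)

lemma continuous_on_taylor_poly_deriv_diag: "continuous_on A (\<lambda>x. taylor_poly_deriv c p x x)"
  unfolding taylor_poly_deriv_def by (intro continuous_intros)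

lemma monomial_at_zero: "mdeg \<alpha> \<noteq> 0 \<Longrightarrow> monomial \<alpha> 0 = 0"
  unfolding mdeg_def monomial_def by (auto intro: prod_zero)

lemma taylor_poly_at_zero: "taylor_poly c p 0 = 0"
  unfolding taylor_poly_def by (simp add: monomial_at_zero)

theorem corollary2p5:
  fixes f :: "real^'n::finite \<Rightarrow> real^'n"
    and A :: "real^'n^'n"
    and V :: "real^'n \<Rightarrow> real"
    and gradV :: "real^'n \<Rightarrow> real^'n"
    and U :: "(real^'n) set"
    and c :: "('n \<Rightarrow> nat) \<Rightarrow> real"
    and \<rho> :: real
    and p :: nat
    and r :: real
  assumes f_analytic: "real_analytic_on f UNIV"
    and f0: "f 0 = 0"
    and A_deriv: "(f has_derivative (\<lambda>h. A *v h)) (at 0)"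
    and A_stable: "\<And>(\<mu>::complex) (v::complex^'n). v \<noteq> 0 \<Longrightarrow>
        (\<chi> i j. complex_of_real (A $ i $ j)) *v v = \<mu> *s v \<Longrightarrow> Re \<mu> < 0"
    and U: "open U" "0 \<in> U"
    and V_analytic: "real_analytic_on V U"
    and V_grad: "\<And>x. x \<in> U \<Longrightarrow> GDERIV V x :> gradV x"
    and V_lyap: "\<And>x. x \<in> U \<Longrightarrow> gradV x \<bullet> f x = - (norm x)\<^sup>2"
    and V0: "V 0 = 0"
    and c_taylor: "\<rho> > 0" "has_power_series V c 0 \<rho>"
    and p: "p \<ge> 2"
    and r_pos: "r > 0"
    and r_in_R: "cball 0 r \<subseteq> Gdom f (taylor_poly c p)"
  shows "(\<exists>S. admissible (taylor_poly c p) (Gdom f (taylor_poly c p))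
                (INF x\<in>sphere 0 r. taylor_poly c p x) S)
       \<and> (\<forall>S. admissible (taylor_poly c p) (Gdom f (taylor_poly c p))
                (INF x\<in>sphere 0 r. taylor_poly c p x) S \<longrightarrow> S \<subseteq> cball 0 r)"
proof -
  interpret lyapunov_ball "taylor_poly c p" "taylor_poly_deriv c p" r
  proof
    fix x :: "real^'n" assume "x \<in> cball 0 r" "x \<noteq> 0"
    then have "0 < taylor_poly c p x \<and> taylor_poly_deriv c p x (f x) < 0"
      using r_in_R Gdom_pos_and_decreasing[OF _ _ has_derivative_taylor_poly] by blast
    then show "0 < taylor_poly c p x" "taylor_poly_deriv c p x \<noteq> (\<lambda>h. 0)"
      by auto
  qed (simp_all add: has_derivative_taylor_poly continuous_on_taylor_poly_deriv_diag
      taylor_poly_at_zero r_pos)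
  have "admissible (taylor_poly c p) (Gdom f (taylor_poly c p)) level level_domain"
    unfolding admissible_def
    using connected_level_domain zero_in_level_core level_core_subset_interior W_lt_level_on_interior
      W_eq_level_on_frontier compact_level_domain level_domain_subset_cball r_in_R
    by (auto simp: level_domain_def)
  moreover have "S \<subseteq> cball 0 r"
    if S: "admissible (taylor_poly c p) (Gdom f (taylor_poly c p)) level S" for S
    using S interior_subset admissible_le_level[OF S]
    by (intro connected_sublevel_subset_cball) (auto simp: admissible_def)
  ultimately show ?thesis
    unfolding level_def by blast
qed


end
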